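(* Let $\Omega\subset\mathbb{R}^d$ be nonempty, convex and compact with diameter $D$, and let $F(x)=\frac1n\sum_{i=1}^n f_i(x)$ where each $f_i$ is differentiable and $L$-smooth. Let $x^*\in\arg\min_{x\in\Omega}F(x)$, $x_0\in\Omega$, $\beta>0$ with $\beta\ge\frac{2(F(x_0)-F(x^* ))}{LD^2}$, let $m\ge1$ be an integer and $T$ a positive multiple of $m$. Run SVFW (defined in the context) with epoch size $m$, $S=T/m$ epochs, constant step size $\gamma_t=\gamma=\sqrt{\frac{F(x_0)-F(x^* )}{TLD^2\beta}}$ and minibatch size $b_t=b=m^2$ for all $t\in\{0,\dots,m-1\}$. Then the output $x_a$ satisfies $$\mathbb{E}[\mathcal{G}(x_a)]\le\frac{2D}{\sqrt{T\beta}}\sqrt{L(F(x_0)-F(x^* ))}\,(1+\beta).$$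
   Context: $f_i$ is $L$-smooth means $\|\nabla f_i(x)-\nabla f_i(y)\|\le L\|x-y\|$ for all $x,y\in\Omega$; diameter $D$ means $\|x-y\|\le D$ for all $x,y\in\Omega$. Frank–Wolfe gap: $\mathcal{G}(x)=\max_{v\in\Omega}\langle v-x,-\nabla F(x)\rangle$. Algorithm SVFW (input $x_0$, epoch size $m$, number of epochs $S$, step sizes $\gamma_t\in[0,1]$, minibatch sizes $b_t$, $t=0,\dots,m-1$): set $x^0_m=x_0$. For $s=0,\dots,S-1$: let $\tilde x^s=x^s_m$, compute $\tilde g^s=\nabla F(\tilde x^s)$, set $x^{s+1}_0=\tilde x^s$; for $t=0,\dots,m-1$: draw a multiset $I_t$ of $b_t$ indices uniformly at random with replacement from $\{1,\dots,n\}$ (independently of the past), set $\tilde\nabla_t=\frac{1}{b_t}\sum_{i\in I_t}\big(\nabla f_i(x^{s+1}_t)-\nabla f_i(\tilde x^s)\big)+\tilde g^s$, compute $v^{s+1}_t\in\arg\max_{v\in\Omega}\langle v,-\tilde\nabla_t\rangle$ and set $x^{s+1}_{t+1}=x^{s+1}_t+\gamma_t(v^{s+1}_t-x^{s+1}_t)$. The output $x_a$ is chosen uniformly at random from $\{x^{s+1}_t: 0\le t\le m-1,\ 0\le s\le S-1\}$. *)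

theory Defs
  imports "HOL-Analysis.Analysis" "HOL-Probability.Probability"
begin

text \<open>Finite-sum objective F = (1/n) sum_{i<n} f_i (indices 0..n-1 stand for 1..n).\<close>
definition avgF :: "nat \<Rightarrow> (nat \<Rightarrow> 'a \<Rightarrow> real) \<Rightarrow> 'a \<Rightarrow> real" where
  "avgF n f x = (1 / real n) * (\<Sum>i<n. f i x)"

definition avgGrad :: "nat \<Rightarrow> (nat \<Rightarrow> 'a \<Rightarrow> 'a::real_normed_vector) \<Rightarrow> 'a \<Rightarrow> 'a" where
  "avgGrad n gf x = (1 / real n) *\<^sub>R (\<Sum>i<n. gf i x)"

definition fw_gap :: "'a::real_inner set \<Rightarrow> ('a \<Rightarrow> 'a) \<Rightarrow> 'a \<Rightarrow> real" where
  "fw_gap \<Omega> gradF x = Sup ((\<lambda>v. (v - x) \<bullet> (- gradF x)) ` \<Omega>)"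

definition is_lmo :: "'a::real_inner set \<Rightarrow> ('a \<Rightarrow> 'a) \<Rightarrow> bool" where
  "is_lmo \<Omega> lmo \<longleftrightarrow> (\<forall>g. lmo g \<in> \<Omega> \<and> (\<forall>v\<in>\<Omega>. v \<bullet> (- g) \<le> lmo g \<bullet> (- g)))"

text \<open>SVFW trajectory, indexed by the global step k = s*m + t.  The state is
  (current iterate x_k, snapshot of the current epoch).  The randomness is
  w :: nat => nat => nat, where w k j is the j-th sampled index at global step k.
  At the start of each epoch (k mod m = 0) the snapshot is set to the current iterate.
  traj ... k = (x^{s+1}_t, \<dots>) for k = s*m + t; in particular fst (traj ... (s*m+m))
  = x^{s+1}_m = x^{s+2}_0.\<close>
primrec svfw_traj ::
  "nat \<Rightarrow> (nat \<Rightarrow> 'a \<Rightarrow> 'a::real_inner) \<Rightarrow> ('a \<Rightarrow> 'a) \<Rightarrow> nat \<Rightarrow> real \<Rightarrow> nat \<Rightarrow> 'a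
     \<Rightarrow> (nat \<Rightarrow> nat \<Rightarrow> nat) \<Rightarrow> nat \<Rightarrow> 'a \<times> 'a" where
  "svfw_traj n gf lmo m \<gamma> b x0 w 0 = (x0, x0)"
| "svfw_traj n gf lmo m \<gamma> b x0 w (Suc k) =
     (let (x, xs) = svfw_traj n gf lmo m \<gamma> b x0 w k;
          xt = (if k mod m = 0 then x else xs);
          est = (1 / real b) *\<^sub>R (\<Sum>j<b. gf (w k j) x - gf (w k j) xt) + avgGrad n gf xt;
          v = lmo est
      in (x + \<gamma> *\<^sub>R (v - x), xt))"

definition sample_pmf :: "nat \<Rightarrow> nat \<Rightarrow> nat \<Rightarrow> (nat \<Rightarrow> nat \<Rightarrow> nat) pmf" where
  "sample_pmf T b n =
     Pi_pmf {..<T} (\<lambda>_. 0) (\<lambda>_. Pi_pmf {..<b} 0 (\<lambda>_. pmf_of_set {..<n}))"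

text \<open>Distribution of the output x_a of SVFW with T = S*m total inner steps:
  uniform over the iterates x_k, k < T (i.e. x^{s+1}_t, 0<=t<m, 0<=s<S).\<close>
definition svfw_output ::
  "nat \<Rightarrow> (nat \<Rightarrow> 'a \<Rightarrow> 'a::real_inner) \<Rightarrow> ('a \<Rightarrow> 'a) \<Rightarrow> nat \<Rightarrow> nat \<Rightarrow> real \<Rightarrow> nat \<Rightarrow> 'a \<Rightarrow> 'a pmf" where
  "svfw_output n gf lmo m S \<gamma> b x0 =
     do { w \<leftarrow> sample_pmf (S * m) b n;
          k \<leftarrow> pmf_of_set {..<S * m};
          return_pmf (fst (svfw_traj n gf lmo m \<gamma> b x0 w k)) }"

end

theory Submission
  imports Defs
begin

text \<open>A Frank--Wolfe step of length \<open>\<gamma>\<close> taken with an estimate \<open>g\<close> of \<open>\<nabla>F(x\<^sub>k)\<close>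
  decreases \<open>F\<close> by at least \<open>\<gamma> \<G>(x\<^sub>k)\<close>, up to the curvature term \<open>L \<gamma>\<^sup>2 D\<^sup>2 / 2\<close>
  and the error term \<open>\<gamma> D \<parallel>g - \<nabla>F(x\<^sub>k)\<parallel>\<close>; summing over the \<open>T\<close> steps telescopes \<open>F\<close>.
  Given the past, the variance-reduced estimator is unbiased with variance at most
  \<open>L\<^sup>2 \<parallel>x\<^sub>k - x\<^sub>s\<parallel>\<^sup>2 / b\<close>, where \<open>x\<^sub>s\<close> is the snapshot of the current epoch, and
  within an epoch the iterate moves by at most \<open>\<gamma> D\<close> per step.  So the expected error is
  at most \<open>L m \<gamma> D / \<surd>b = L \<gamma> D\<close> for \<open>b = m\<^sup>2\<close>, giving
  \<open>\<gamma> T E[\<G>(x\<^sub>a)] \<le> F(x\<^sub>0) - F(x\<^sup>*) + 3/2 T L \<gamma>\<^sup>2 D\<^sup>2\<close>; the chosen \<open>\<gamma>\<close>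
  balances the two terms, and the condition on \<open>\<beta>\<close> guarantees \<open>\<gamma> \<le> 1\<close>.\<close>

lemma avgF_has_derivative:
  assumes "\<And>i. i < n \<Longrightarrow> (f i has_derivative (\<lambda>h. gf i x \<bullet> h)) (at x)"
  shows "(avgF n f has_derivative (\<lambda>h. avgGrad n gf x \<bullet> h)) (at x)"
proof -
  have "((\<lambda>x. \<Sum>i<n. f i x) has_derivative (\<lambda>h. \<Sum>i<n. gf i x \<bullet> h)) (at x)"
    by (rule has_derivative_sum) (use assms in auto)
  then have "((\<lambda>x. (1 / real n) * (\<Sum>i<n. f i x))
               has_derivative (\<lambda>h. (1 / real n) * (\<Sum>i<n. gf i x \<bullet> h))) (at x)"
    by (rule has_derivative_mult_right)
  then show ?thesis
    by (simp add: avgF_def[abs_def] avgGrad_def inner_sum_left)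
qed

lemma avgGrad_lipschitz:
  fixes gf :: "nat \<Rightarrow> 'a \<Rightarrow> 'a::real_normed_vector"
  assumes "n \<ge> 1" and "\<And>i. i < n \<Longrightarrow> norm (gf i x - gf i y) \<le> L * norm (x - y)"
  shows "norm (avgGrad n gf x - avgGrad n gf y) \<le> L * norm (x - y)"
proof -
  have "norm (avgGrad n gf x - avgGrad n gf y) = (1 / real n) * norm (\<Sum>i<n. gf i x - gf i y)"
    by (simp add: avgGrad_def sum_subtractf flip: scaleR_diff_right)
  also have "\<dots> \<le> (1 / real n) * (\<Sum>i<n. L * norm (x - y))"
    by (intro mult_left_mono order_trans[OF norm_sum] sum_mono assms) auto
  also have "\<dots> = L * norm (x - y)"
    using assms(1) by simp
  finally show ?thesis .
qed

lemma lipschitz_gradient_quadratic_bound: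
  fixes F :: "'a::real_inner \<Rightarrow> real"
  assumes cvx: "convex \<Omega>" and x: "x \<in> \<Omega>" and y: "y \<in> \<Omega>"
    and der: "\<And>z. z \<in> \<Omega> \<Longrightarrow> (F has_derivative (\<lambda>h. g z \<bullet> h)) (at z)"
    and lip: "\<And>z w. z \<in> \<Omega> \<Longrightarrow> w \<in> \<Omega> \<Longrightarrow> norm (g z - g w) \<le> L * norm (z - w)"
  shows "F y \<le> F x + g x \<bullet> (y - x) + L / 2 * norm (y - x)^2"
proof -
  define \<phi> where
    "\<phi> t = F (x + t *\<^sub>R (y - x)) - t * (g x \<bullet> (y - x)) - L / 2 * t^2 * norm (y - x)^2" for t
  have "\<phi> 1 \<le> \<phi> 0"
  proof (rule DERIV_nonpos_imp_nonincreasing[of 0 1 \<phi>])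
    fix t :: real
    assume t: "0 \<le> t" "t \<le> 1"
    define z where "z = x + t *\<^sub>R (y - x)"
    have z: "z \<in> \<Omega>"
      using convexD_alt[OF cvx x y, of t] t by (simp add: z_def algebra_simps)
    have "((\<lambda>t. x + t *\<^sub>R (y - x)) has_derivative (\<lambda>h. h *\<^sub>R (y - x))) (at t)"
      by (auto intro!: derivative_eq_intros)
    moreover have "(F has_derivative (\<lambda>h. g z \<bullet> h)) (at (x + t *\<^sub>R (y - x)))"
      using der[OF z] by (simp add: z_def)
    ultimately have
      "((\<lambda>t. F (x + t *\<^sub>R (y - x))) has_derivative (\<lambda>h. g z \<bullet> (h *\<^sub>R (y - x)))) (at t)"
      by (rule has_derivative_compose)
    then have "((\<lambda>t. F (x + t *\<^sub>R (y - x))) has_real_derivative (g z \<bullet> (y - x))) (at t)"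
      by (simp add: has_field_derivative_def mult.commute[of _ "g z \<bullet> (y - x)"])
    then have "(\<phi> has_real_derivative
                 (g z - g x) \<bullet> (y - x) - L * t * norm (y - x)^2) (at t)"
      unfolding \<phi>_def[abs_def]
      by (auto intro!: derivative_eq_intros simp: inner_diff_left)
    moreover have "(g z - g x) \<bullet> (y - x) \<le> L * t * norm (y - x)^2"
    proof -
      have "(g z - g x) \<bullet> (y - x) \<le> norm (g z - g x) * norm (y - x)"
        by (rule norm_cauchy_schwarz)
      also have "\<dots> \<le> L * norm (z - x) * norm (y - x)"
        by (intro mult_right_mono lip z x) auto
      also have "norm (z - x) = t * norm (y - x)"
        using t by (simp add: z_def)
      finally show ?thesis by (simp add: power2_eq_square algebra_simps)
    qed
    ultimately show "\<exists>d. (\<phi> has_real_derivative d) (at t) \<and> d \<le> 0"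
      by auto
  qed simp
  then show ?thesis
    by (simp add: \<phi>_def)
qed

lemma fw_gap_le:
  fixes G :: "'a::real_inner \<Rightarrow> 'a"
  assumes "\<Omega> \<noteq> {}" and "\<And>u. u \<in> \<Omega> \<Longrightarrow> (u - x) \<bullet> (- G x) \<le> B"
  shows "fw_gap \<Omega> G x \<le> B"
  unfolding fw_gap_def using assms by (intro cSUP_least) auto

lemma fw_gap_inexact_step:
  fixes G :: "'a::real_inner \<Rightarrow> 'a" and F :: "'a \<Rightarrow> real"
  assumes ne: "\<Omega> \<noteq> {}" and x: "x \<in> \<Omega>" and v: "v \<in> \<Omega>"
    and v_max: "\<And>u. u \<in> \<Omega> \<Longrightarrow> u \<bullet> (- est) \<le> v \<bullet> (- est)"
    and diam: "\<And>x y. x \<in> \<Omega> \<Longrightarrow> y \<in> \<Omega> \<Longrightarrow> norm (x - y) \<le> D"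
    and "0 \<le> \<gamma>" and "0 \<le> L"
    and descent: "F (x + \<gamma> *\<^sub>R (v - x))
                    \<le> F x + G x \<bullet> (\<gamma> *\<^sub>R (v - x)) + L / 2 * norm (\<gamma> *\<^sub>R (v - x))^2"
  shows "\<gamma> * fw_gap \<Omega> G x
           \<le> F x - F (x + \<gamma> *\<^sub>R (v - x)) + L / 2 * \<gamma>^2 * D^2 + \<gamma> * D * norm (est - G x)"
proof -
  define e where "e = est - G x"
  have "fw_gap \<Omega> G x \<le> - (G x \<bullet> (v - x)) + D * norm e"
  proof (rule fw_gap_le[OF ne])
    fix u
    assume u: "u \<in> \<Omega>"
    have "(u - x) \<bullet> (- G x) = (u - x) \<bullet> (- est) + (u - x) \<bullet> e"
      by (simp add: e_def inner_diff_right)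
    also have "(u - x) \<bullet> (- est) \<le> (v - x) \<bullet> (- est)"
      using v_max[OF u] by (simp add: inner_diff_left)
    also have "(v - x) \<bullet> (- est) = - (G x \<bullet> (v - x)) - (v - x) \<bullet> e"
      by (simp add: e_def inner_diff_right inner_commute)
    finally have "(u - x) \<bullet> (- G x) \<le> - (G x \<bullet> (v - x)) + (u - v) \<bullet> e"
      by (simp add: inner_diff_left)
    also have "(u - v) \<bullet> e \<le> norm (u - v) * norm e"
      by (rule norm_cauchy_schwarz)
    also have "\<dots> \<le> D * norm e"
      by (intro mult_right_mono diam u v) auto
    finally show "(u - x) \<bullet> (- G x) \<le> - (G x \<bullet> (v - x)) + D * norm e"
      by simp
  qed
  then have "\<gamma> * fw_gap \<Omega> G x \<le> \<gamma> * (- (G x \<bullet> (v - x)) + D * norm e)"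
    using \<open>0 \<le> \<gamma>\<close> by (rule mult_left_mono)
  moreover have "norm (\<gamma> *\<^sub>R (v - x))^2 \<le> \<gamma>^2 * D^2"
    using diam[OF v x] \<open>0 \<le> \<gamma>\<close> by (simp add: power_mult_distrib mult_left_mono power_mono)
  then have "F (x + \<gamma> *\<^sub>R (v - x)) \<le> F x + \<gamma> * (G x \<bullet> (v - x)) + L / 2 * (\<gamma>^2 * D^2)"
    using descent mult_left_mono[of _ _ "L / 2"] \<open>0 \<le> L\<close> by fastforce
  ultimately show ?thesis
    by (simp add: e_def algebra_simps)
qed

text \<open>First-order optimality: otherwise a short step towards \<open>u\<close> would decrease F.\<close>
lemma fw_gap_nonpos_at_minimizer:
  fixes G :: "'a::real_inner \<Rightarrow> 'a" and F :: "'a \<Rightarrow> real"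
  assumes ne: "\<Omega> \<noteq> {}" and cvx: "convex \<Omega>" and x: "x \<in> \<Omega>"
    and min: "\<And>y. y \<in> \<Omega> \<Longrightarrow> F x \<le> F y"
    and diam: "\<And>x y. x \<in> \<Omega> \<Longrightarrow> y \<in> \<Omega> \<Longrightarrow> norm (x - y) \<le> D"
    and "0 \<le> L"
    and descent: "\<And>y. y \<in> \<Omega> \<Longrightarrow> F y \<le> F x + G x \<bullet> (y - x) + L / 2 * norm (y - x)^2"
  shows "fw_gap \<Omega> G x \<le> 0"
proof (rule fw_gap_le[OF ne])
  fix u
  assume u: "u \<in> \<Omega>"
  define c where "c = (u - x) \<bullet> (- G x)"
  show "(u - x) \<bullet> (- G x) \<le> 0"
  proof (rule ccontr)
    assume "\<not> (u - x) \<bullet> (- G x) \<le> 0"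
    then have "c > 0" by (simp add: c_def)
    have LD: "0 \<le> L * D^2" using \<open>0 \<le> L\<close> by simp
    define s where "s = min 1 (c / (L * D^2 + 1))"
    have "s \<le> c / (L * D^2 + 1)"
      by (simp add: s_def)
    then have "s * (L * D^2 + 1) \<le> c"
      using LD by (subst (asm) pos_le_divide_eq) auto
    moreover have "0 < s" "s \<le> 1"
      using \<open>c > 0\<close> LD by (auto simp: s_def)
    ultimately have s: "0 < s" "s \<le> 1" "s * (L * D^2 + 1) \<le> c"
      by auto
    have y: "x + s *\<^sub>R (u - x) \<in> \<Omega>"
      using convexD_alt[OF cvx x u, of s] s by (simp add: algebra_simps)
    have "F x \<le> F x + G x \<bullet> (s *\<^sub>R (u - x)) + L / 2 * norm (s *\<^sub>R (u - x))^2"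
      using min[OF y] descent[OF y] by simp
    also have "norm (s *\<^sub>R (u - x))^2 = s^2 * norm (u - x)^2"
      using s by (simp add: power_mult_distrib)
    finally have "0 \<le> - s * c + L / 2 * (s^2 * norm (u - x)^2)"
      by (simp add: c_def inner_diff_right inner_commute algebra_simps)
    also have "\<dots> \<le> - s * c + L / 2 * (s^2 * D^2)"
      using \<open>0 \<le> L\<close> by (intro add_left_mono mult_left_mono power_mono diam u x) auto
    finally have "c \<le> s * (L * D^2 / 2)"
      using s by (simp add: power2_eq_square algebra_simps)
    also have "\<dots> < s * (L * D^2 + 1)"
      using s LD by (intro mult_strict_left_mono) auto
    finally show False
      using s by simp
  qed
qed

lemma finite_set_Pi_pmf:
  assumes "finite A" and "\<And>i. i \<in> A \<Longrightarrow> finite (set_pmf (p i))"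
  shows "finite (set_pmf (Pi_pmf A dflt p))"
  using assms by (subst set_Pi_pmf) (auto intro!: finite_PiE_dflt)

lemma expectation_bind_pmf_finite:
  fixes h :: "'b \<Rightarrow> real"
  assumes "finite (set_pmf p)" and "\<And>a. a \<in> set_pmf p \<Longrightarrow> finite (set_pmf (f a))"
  shows "measure_pmf.expectation (bind_pmf p f) h
           = measure_pmf.expectation p (\<lambda>a. measure_pmf.expectation (f a) h)"
  using assms
  by (subst pmf_expectation_bind[of "set_pmf p"]) (auto simp: integral_measure_pmf[of "set_pmf p"])

lemma expectation_Pi_pmf_insert:
  fixes h :: "('i \<Rightarrow> 'b) \<Rightarrow> real"
  assumes A: "finite A" "i \<notin> A" and fin: "\<And>j. finite (set_pmf (p j))"
  shows "measure_pmf.expectation (Pi_pmf (insert i A) dflt p) h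
           = measure_pmf.expectation (Pi_pmf A dflt p)
               (\<lambda>f. measure_pmf.expectation (p i) (\<lambda>y. h (f(i := y))))"
proof -
  have "Pi_pmf (insert i A) dflt p
          = map_pmf (\<lambda>(y, f). f(i := y)) (map_pmf (\<lambda>(f, y). (y, f)) (pair_pmf (Pi_pmf A dflt p) (p i)))"
    by (simp add: Pi_pmf_insert[OF A] flip: pair_commute_pmf)
  also have "\<dots> = map_pmf (\<lambda>(f, y). f(i := y)) (pair_pmf (Pi_pmf A dflt p) (p i))"
    by (simp add: map_pmf_comp case_prod_unfold)
  finally show ?thesis
    using finite_set_Pi_pmf[OF A(1) fin]
    by (simp add: pair_pmf_def expectation_bind_pmf_finite fin)
qed

lemma expectation_le_sqrt_expectation_square:
  fixes g :: "'a \<Rightarrow> real"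
  assumes "finite (set_pmf p)"
  shows "measure_pmf.expectation p g \<le> sqrt (measure_pmf.expectation p (\<lambda>x. (g x)^2))"
proof -
  define c where "c = measure_pmf.expectation p g"
  have int: "integrable p h" for h :: "'a \<Rightarrow> real"
    using assms by (rule integrable_measure_pmf_finite)
  have "0 \<le> measure_pmf.expectation p (\<lambda>x. (g x - c)^2)"
    by simp
  also have "\<dots> = measure_pmf.expectation p (\<lambda>x. (g x)^2) + c^2 - 2 * c * c"
    by (simp add: power2_diff int Bochner_Integration.integral_add Bochner_Integration.integral_diff
        c_def mult.commute[of _ c] mult.assoc)
  finally show ?thesis
    by (simp add: c_def power2_eq_square real_le_rsqrt)
qed

lemma finite_set_pmf_of_lessThan: "n \<ge> 1 \<Longrightarrow> finite (set_pmf (pmf_of_set {..<n::nat}))"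
  by (simp add: lessThan_empty_iff)

text \<open>The cross terms vanish because each centred sample has mean zero.\<close>
lemma expectation_norm_sum_centered_samples:
  fixes a :: "nat \<Rightarrow> 'a::real_inner"
  assumes n: "n \<ge> 1"
  defines "\<mu> \<equiv> (1 / real n) *\<^sub>R (\<Sum>i<n. a i)"
  shows "measure_pmf.expectation (Pi_pmf {..<b} 0 (\<lambda>_. pmf_of_set {..<n}))
           (\<lambda>y. norm (\<Sum>j<b. a (y j) - \<mu>)^2)
         = real b * ((\<Sum>i<n. norm (a i - \<mu>)^2) / real n)"
proof (induction b)
  case 0
  then show ?case by simp
next
  case (Suc b)
  define V where "V = (\<Sum>i<n. norm (a i - \<mu>)^2) / real n"
  define U where "U = pmf_of_set {..<n}"
  have U_fin: "finite (set_pmf U)"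
    using n by (simp add: U_def finite_set_pmf_of_lessThan)
  have U_step: "measure_pmf.expectation U (\<lambda>z. norm (s + (a z - \<mu>))^2) = norm s^2 + V" for s
  proof -
    have "(\<Sum>z<n. norm (s + (a z - \<mu>))^2)
            = (\<Sum>z<n. norm s^2 + 2 * (s \<bullet> (a z - \<mu>)) + norm (a z - \<mu>)^2)"
      by (intro sum.cong refl) (simp add: power2_norm_eq_inner algebra_simps inner_commute)
    also have "\<dots> = real n * norm s^2 + 2 * (s \<bullet> (\<Sum>z<n. a z - \<mu>)) + (\<Sum>z<n. norm (a z - \<mu>)^2)"
      by (simp add: sum.distrib inner_sum_right sum_distrib_left)
    also have "(\<Sum>z<n. a z - \<mu>) = 0"
      using n by (simp add: \<mu>_def sum_subtractf sum_constant_scaleR)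
    finally show ?thesis
      using n by (simp add: U_def V_def integral_pmf_of_set lessThan_empty_iff field_simps)
  qed
  have "measure_pmf.expectation (Pi_pmf (insert b {..<b}) 0 (\<lambda>_. U))
          (\<lambda>y. norm (\<Sum>j<Suc b. a (y j) - \<mu>)^2)
        = measure_pmf.expectation (Pi_pmf {..<b} 0 (\<lambda>_. U))
            (\<lambda>f. norm (\<Sum>j<b. a (f j) - \<mu>)^2 + V)"
    by (simp add: expectation_Pi_pmf_insert U_fin U_step)
  also have "\<dots> = real b * V + V"
    using Suc.IH finite_set_Pi_pmf[of "{..<b}" "\<lambda>_. U"] U_fin
    by (simp add: Bochner_Integration.integral_add integrable_measure_pmf_finite U_def V_def)
  finally show ?case
    by (simp add: lessThan_Suc U_def V_def add_divide_distrib algebra_simps)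
qed

lemma mean_sq_deviation_le:
  fixes a :: "nat \<Rightarrow> 'a::real_inner"
  assumes n: "n \<ge> 1" and M: "\<And>i. i < n \<Longrightarrow> norm (a i) \<le> M"
  defines "\<mu> \<equiv> (1 / real n) *\<^sub>R (\<Sum>i<n. a i)"
  shows "(\<Sum>i<n. norm (a i - \<mu>)^2) / real n \<le> M^2"
proof -
  have "(\<Sum>i<n. norm (a i - \<mu>)^2) = (\<Sum>i<n. norm (a i)^2 - 2 * (a i \<bullet> \<mu>) + norm \<mu>^2)"
    by (intro sum.cong refl) (simp add: power2_norm_eq_inner algebra_simps inner_commute)
  also have "\<dots> = (\<Sum>i<n. norm (a i)^2) - 2 * ((\<Sum>i<n. a i) \<bullet> \<mu>) + real n * norm \<mu>^2"
    by (simp add: sum.distrib sum_subtractf inner_sum_left sum_distrib_left)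
  also have "(\<Sum>i<n. a i) = real n *\<^sub>R \<mu>"
    using n by (simp add: \<mu>_def)
  also have "(\<Sum>i<n. norm (a i)^2) - 2 * ((real n *\<^sub>R \<mu>) \<bullet> \<mu>) + real n * norm \<mu>^2
               = (\<Sum>i<n. norm (a i)^2) - real n * norm \<mu>^2"
    by (simp add: power2_norm_eq_inner)
  also have "\<dots> \<le> (\<Sum>i<n. norm (a i)^2)"
    by simp
  also have "\<dots> \<le> (\<Sum>i<n. M^2)"
    by (intro sum_mono power_mono M) auto
  finally show ?thesis
    using n by (simp add: field_simps)
qed

lemma expectation_minibatch_error:
  fixes gf :: "nat \<Rightarrow> 'a \<Rightarrow> 'a::real_inner"
  assumes n: "n \<ge> 1" and b: "b \<ge> 1" and M: "\<And>i. i < n \<Longrightarrow> norm (gf i x - gf i z) \<le> M"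
  shows "measure_pmf.expectation (Pi_pmf {..<b} 0 (\<lambda>_. pmf_of_set {..<n}))
           (\<lambda>y. norm ((1 / real b) *\<^sub>R (\<Sum>j<b. gf (y j) x - gf (y j) z)
                       + avgGrad n gf z - avgGrad n gf x))
         \<le> M / sqrt (real b)"
proof -
  define a where "a i = gf i x - gf i z" for i
  define \<mu> where "\<mu> = (1 / real n) *\<^sub>R (\<Sum>i<n. a i)"
  define Y where "Y = Pi_pmf {..<b} 0 (\<lambda>_. pmf_of_set {..<n})"
  have "0 \<le> M"
    using M[of 0] n by (meson norm_ge_zero order_trans less_le_trans zero_less_one)
  have "avgGrad n gf x - avgGrad n gf z = \<mu>"
    by (simp add: avgGrad_def \<mu>_def a_def sum_subtractf scaleR_diff_right)
  moreover have "(1 / real b) *\<^sub>R (\<Sum>j<b. a (y j) - \<mu>) = (1 / real b) *\<^sub>R (\<Sum>j<b. a (y j)) - \<mu>"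
    for y :: "nat \<Rightarrow> nat"
    using b by (simp add: sum_subtractf scaleR_diff_right sum_constant_scaleR)
  ultimately have centered:
    "(1 / real b) *\<^sub>R (\<Sum>j<b. gf (y j) x - gf (y j) z) + avgGrad n gf z - avgGrad n gf x
       = (1 / real b) *\<^sub>R (\<Sum>j<b. a (y j) - \<mu>)" for y :: "nat \<Rightarrow> nat"
    by (simp add: a_def algebra_simps)
  have "measure_pmf.expectation Y (\<lambda>y. norm ((1 / real b) *\<^sub>R (\<Sum>j<b. a (y j) - \<mu>))^2)
          = measure_pmf.expectation Y (\<lambda>y. (1 / real b)^2 * norm (\<Sum>j<b. a (y j) - \<mu>)^2)"
    by (intro Bochner_Integration.integral_cong refl) (simp add: power_divide)
  also have "\<dots> = (1 / real b)^2 * (real b * ((\<Sum>i<n. norm (a i - \<mu>)^2) / real n))"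
    unfolding integral_mult_right_zero Y_def \<mu>_def
    by (subst expectation_norm_sum_centered_samples[OF n]) simp
  also have "\<dots> \<le> (1 / real b)^2 * (real b * M^2)"
    unfolding \<mu>_def using M
    by (intro mult_left_mono mean_sq_deviation_le[OF n]) (auto simp: a_def)
  also have "\<dots> = (M / sqrt (real b))^2"
    using b by (simp add: power2_eq_square power_divide)
  finally have "sqrt (measure_pmf.expectation Y (\<lambda>y. norm ((1 / real b) *\<^sub>R (\<Sum>j<b. a (y j) - \<mu>))^2))
                  \<le> M / sqrt (real b)"
    using \<open>0 \<le> M\<close> by (intro real_le_lsqrt) auto
  with expectation_le_sqrt_expectation_square[of Y]
  show ?thesis
    using finite_set_Pi_pmf[of "{..<b}" "\<lambda>_. pmf_of_set {..<n}"] finite_set_pmf_of_lessThan[OF n]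
    unfolding Y_def centered by (meson order_trans finite_lessThan)
qed

lemma finite_set_sample_pmf: "n \<ge> 1 \<Longrightarrow> finite (set_pmf (sample_pmf T b n))"
  unfolding sample_pmf_def
  by (intro finite_set_Pi_pmf finite_set_pmf_of_lessThan) auto

lemma svfw_step_size_le_one:
  fixes \<Delta> L D \<beta> T :: real
  assumes "0 \<le> \<Delta>" and "0 < L" and "0 < \<beta>" and "1 \<le> T" and "2 * \<Delta> / (L * D^2) \<le> \<beta>"
  shows "sqrt (\<Delta> / (T * L * D^2 * \<beta>)) \<le> 1"
proof (cases "D = 0")
  case False
  then have "0 < L * D^2"
    using assms by simp
  then have "2 * \<Delta> \<le> \<beta> * (L * D^2)"
    using assms(5) by (simp add: pos_divide_le_eq)
  also have "\<dots> \<le> T * (\<beta> * (L * D^2))"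
    using assms \<open>0 < L * D^2\<close> mult_right_mono[of 1 T "\<beta> * (L * D^2)"] by simp
  finally have "\<Delta> \<le> T * L * D^2 * \<beta>"
    using assms(1) by (simp add: algebra_simps)
  then show ?thesis
    using assms \<open>0 < L * D^2\<close> by (simp add: divide_le_eq)
qed simp

text \<open>With \<open>\<Delta> = \<gamma>\<^sup>2 T L D\<^sup>2 \<beta>\<close> the bound reads \<open>A \<le> \<gamma> L D\<^sup>2 (\<beta> + 3/2)\<close>, and
  \<open>2 \<gamma> L D\<^sup>2\<close> is exactly the factor in front of \<open>1 + \<beta>\<close> on the right.\<close>
lemma svfw_rate:
  fixes \<Delta> D L \<beta> T A \<gamma> :: real
  assumes "\<Delta> > 0" and "D > 0" and "L > 0" and "\<beta> > 0" and "T \<ge> 1"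
    and \<gamma>: "\<gamma> = sqrt (\<Delta> / (T * L * D^2 * \<beta>))"
    and bound: "\<gamma> * T * A \<le> \<Delta> + T * (L / 2 * \<gamma>^2 * D^2 + \<gamma> * D * (L * \<gamma> * D))"
  shows "A \<le> 2 * D / sqrt (T * \<beta>) * sqrt (L * \<Delta>) * (1 + \<beta>)"
proof -
  have "\<Delta> / (T * L * D^2 * \<beta>) > 0"
    using assms by simp
  then have "\<gamma> > 0" and \<Delta>: "\<Delta> = \<gamma>^2 * T * L * D^2 * \<beta>"
    using assms by (simp_all add: field_simps)
  have "\<gamma> * T * A \<le> \<gamma> * T * (\<gamma> * L * D^2 * (\<beta> + 3/2))"
    using bound unfolding \<Delta> by (simp add: power2_eq_square algebra_simps)
  then have "A \<le> \<gamma> * L * D^2 * (\<beta> + 3/2)"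
    using \<open>\<gamma> > 0\<close> assms(5) by (simp add: mult_le_cancel_left_pos)
  also have "\<dots> \<le> 2 * \<gamma> * L * D^2 * (1 + \<beta>)"
    using \<open>\<gamma> > 0\<close> assms by (simp add: algebra_simps)
  also have "2 * \<gamma> * L * D^2 = 2 * D * sqrt ((\<gamma> * L * D)^2)"
    using \<open>\<gamma> > 0\<close> assms by (simp add: power2_eq_square)
  also have "(\<gamma> * L * D)^2 = L * \<Delta> / (T * \<beta>)"
    using assms unfolding \<Delta> by (simp add: power2_eq_square field_simps)
  finally show ?thesis
    by (simp add: real_sqrt_divide)
qed

locale svfw_run =
  fixes \<Omega> :: "'a::real_inner set" and f :: "nat \<Rightarrow> 'a \<Rightarrow> real" and gf :: "nat \<Rightarrow> 'a \<Rightarrow> 'a"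
    and n :: nat and L D :: real and lmo :: "'a \<Rightarrow> 'a"
    and m b :: nat and \<gamma> :: real and x0 :: 'a
  assumes nonempty: "\<Omega> \<noteq> {}" and convex: "convex \<Omega>"
    and n_pos: "n \<ge> 1" and L_nonneg: "0 \<le> L"
    and diam: "\<And>x y. x \<in> \<Omega> \<Longrightarrow> y \<in> \<Omega> \<Longrightarrow> norm (x - y) \<le> D"
    and deriv: "\<And>i x. i < n \<Longrightarrow> x \<in> \<Omega> \<Longrightarrow> (f i has_derivative (\<lambda>h. gf i x \<bullet> h)) (at x)"
    and smooth: "\<And>i x y. i < n \<Longrightarrow> x \<in> \<Omega> \<Longrightarrow> y \<in> \<Omega> \<Longrightarrow>
                   norm (gf i x - gf i y) \<le> L * norm (x - y)"
    and lmo: "is_lmo \<Omega> lmo"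
    and m_pos: "m \<ge> 1" and b_pos: "b \<ge> 1"
    and step_nonneg: "0 \<le> \<gamma>" and step_le_one: "\<gamma> \<le> 1"
    and x0_in: "x0 \<in> \<Omega>"
begin

abbreviation F :: "'a \<Rightarrow> real" where "F \<equiv> avgF n f"

abbreviation G :: "'a \<Rightarrow> 'a" where "G \<equiv> avgGrad n gf"

lemma F_quadratic_bound:
  assumes "x \<in> \<Omega>" and "y \<in> \<Omega>"
  shows "F y \<le> F x + G x \<bullet> (y - x) + L / 2 * norm (y - x)^2"
  by (rule lipschitz_gradient_quadratic_bound[OF convex assms])
    (auto intro: avgF_has_derivative deriv avgGrad_lipschitz[OF n_pos] smooth)

definition iterate :: "(nat \<Rightarrow> nat \<Rightarrow> nat) \<Rightarrow> nat \<Rightarrow> 'a" where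
  "iterate w k = fst (svfw_traj n gf lmo m \<gamma> b x0 w k)"

definition snapshot :: "(nat \<Rightarrow> nat \<Rightarrow> nat) \<Rightarrow> nat \<Rightarrow> 'a" where
  "snapshot w k = iterate w (k - k mod m)"

definition estimate :: "(nat \<Rightarrow> nat \<Rightarrow> nat) \<Rightarrow> nat \<Rightarrow> 'a" where
  "estimate w k = (1 / real b) *\<^sub>R (\<Sum>j<b. gf (w k j) (iterate w k) - gf (w k j) (snapshot w k))
                    + G (snapshot w k)"

lemma svfw_traj_epoch_start:
  "(if k mod m = 0 then fst (svfw_traj n gf lmo m \<gamma> b x0 w k)
    else snd (svfw_traj n gf lmo m \<gamma> b x0 w k)) = snapshot w k"
proof (induction k)
  case 0
  then show ?case by (simp add: snapshot_def iterate_def)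
next
  case (Suc k)
  show ?case
  proof (cases "Suc k mod m = 0")
    case True
    then show ?thesis by (simp add: snapshot_def iterate_def)
  next
    case False
    then have "Suc k mod m = Suc (k mod m)"
      by (metis mod_Suc)
    then show ?thesis
      using False Suc.IH by (simp add: snapshot_def Let_def case_prod_unfold)
  qed
qed

lemma svfw_traj_Suc:
  "svfw_traj n gf lmo m \<gamma> b x0 w (Suc k)
     = (iterate w k + \<gamma> *\<^sub>R (lmo (estimate w k) - iterate w k), snapshot w k)"
  using svfw_traj_epoch_start[of k w]
  by (simp add: iterate_def estimate_def Let_def case_prod_unfold)

lemma iterate_0 [simp]: "iterate w 0 = x0"
  by (simp add: iterate_def)

lemma iterate_Suc: "iterate w (Suc k) = iterate w k + \<gamma> *\<^sub>R (lmo (estimate w k) - iterate w k)"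
  by (simp only: iterate_def[of w "Suc k"] svfw_traj_Suc fst_conv)

lemma iterate_cong: "(\<And>j. j < k \<Longrightarrow> w j = w' j) \<Longrightarrow> iterate w k = iterate w' k"
proof -
  assume "\<And>j. j < k \<Longrightarrow> w j = w' j"
  then have "svfw_traj n gf lmo m \<gamma> b x0 w k = svfw_traj n gf lmo m \<gamma> b x0 w' k"
    by (induction k) (auto simp: Let_def case_prod_unfold)
  then show ?thesis
    by (simp add: iterate_def)
qed

lemma snapshot_cong: "(\<And>j. j < k \<Longrightarrow> w j = w' j) \<Longrightarrow> snapshot w k = snapshot w' k"
  unfolding snapshot_def by (rule iterate_cong) auto

lemma lmo_in: "lmo g \<in> \<Omega>"
  using lmo by (simp add: is_lmo_def)

lemma iterate_in: "iterate w k \<in> \<Omega>"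
proof (induction k)
  case 0
  then show ?case by (simp add: x0_in)
next
  case (Suc k)
  have "iterate w (Suc k) = (1 - \<gamma>) *\<^sub>R iterate w k + \<gamma> *\<^sub>R lmo (estimate w k)"
    by (simp add: iterate_Suc algebra_simps)
  then show ?case
    using convexD_alt[OF convex Suc lmo_in] step_nonneg step_le_one by simp
qed

lemma iterate_dist: "norm (iterate w (k + r) - iterate w k) \<le> real r * \<gamma> * D"
proof (induction r)
  case 0
  then show ?case by simp
next
  case (Suc r)
  have "norm (iterate w (k + Suc r) - iterate w (k + r)) \<le> \<gamma> * D"
    using diam[OF lmo_in iterate_in] step_nonneg by (simp add: iterate_Suc mult_left_mono)
  with Suc show ?case
    using norm_diff_triangle_le[of "iterate w (k + Suc r)" "iterate w (k + r)" _ "iterate w k"]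
    by (simp add: algebra_simps)
qed

lemma snapshot_dist: "norm (iterate w k - snapshot w k) \<le> real m * \<gamma> * D"
proof -
  have "norm (iterate w k - snapshot w k) = norm (iterate w ((k - k mod m) + k mod m) - iterate w (k - k mod m))"
    by (simp add: snapshot_def)
  also have "\<dots> \<le> real (k mod m) * \<gamma> * D"
    by (rule iterate_dist)
  also have "\<dots> \<le> real m * \<gamma> * D"
    using m_pos step_nonneg diam[OF x0_in x0_in]
    by (intro mult_right_mono) (auto simp: less_imp_le)
  finally show ?thesis .
qed

lemma gap_decrease:
  "\<gamma> * fw_gap \<Omega> G (iterate w k)
     \<le> F (iterate w k) - F (iterate w (Suc k)) + L / 2 * \<gamma>^2 * D^2
        + \<gamma> * D * norm (estimate w k - G (iterate w k))"
proof -
  have "\<And>u. u \<in> \<Omega> \<Longrightarrow> u \<bullet> (- estimate w k) \<le> lmo (estimate w k) \<bullet> (- estimate w k)"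
    using lmo by (simp add: is_lmo_def)
  moreover have "F (iterate w (Suc k))
                   \<le> F (iterate w k) + G (iterate w k) \<bullet> (iterate w (Suc k) - iterate w k)
                      + L / 2 * norm (iterate w (Suc k) - iterate w k)^2"
    by (rule F_quadratic_bound[OF iterate_in iterate_in])
  ultimately show ?thesis
    unfolding iterate_Suc
    by (intro fw_gap_inexact_step[OF nonempty iterate_in lmo_in _ diam step_nonneg L_nonneg]) auto
qed

lemma gap_sum_bound:
  "\<gamma> * (\<Sum>k<T. fw_gap \<Omega> G (iterate w k))
     \<le> F x0 - F (iterate w T) + real T * (L / 2 * \<gamma>^2 * D^2)
        + \<gamma> * D * (\<Sum>k<T. norm (estimate w k - G (iterate w k)))"
proof -
  have "\<gamma> * (\<Sum>k<T. fw_gap \<Omega> G (iterate w k)) = (\<Sum>k<T. \<gamma> * fw_gap \<Omega> G (iterate w k))"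
    by (simp add: sum_distrib_left)
  also have "\<dots> \<le> (\<Sum>k<T. (F (iterate w k) - F (iterate w (Suc k)))
                     + (L / 2 * \<gamma>^2 * D^2 + \<gamma> * D * norm (estimate w k - G (iterate w k))))"
    by (intro sum_mono) (use gap_decrease in \<open>simp add: algebra_simps\<close>)
  also have "\<dots> = F x0 - F (iterate w T) + real T * (L / 2 * \<gamma>^2 * D^2)
                   + \<gamma> * D * (\<Sum>k<T. norm (estimate w k - G (iterate w k)))"
    using sum_lessThan_telescope'[of "\<lambda>k. F (iterate w k)" T]
    by (simp add: sum.distrib sum_distrib_left)
  finally show ?thesis .
qed

text \<open>The iterate and the snapshot at step \<open>k\<close> depend only on the samples \<open>w j\<close> with \<open>j < k\<close>;
  conditioning on them reduces the claim to the minibatch variance bound.\<close>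
lemma expected_estimate_error:
  assumes "k < T"
  shows "measure_pmf.expectation (sample_pmf T b n) (\<lambda>w. norm (estimate w k - G (iterate w k)))
           \<le> L * (real m * \<gamma> * D) / sqrt (real b)"
proof -
  define Y where "Y = Pi_pmf {..<b} 0 (\<lambda>_. pmf_of_set {..<n})"
  define P where "P = Pi_pmf ({..<T} - {k}) (\<lambda>_. 0) (\<lambda>_. Y)"
  have Y_fin: "finite (set_pmf Y)"
    unfolding Y_def by (intro finite_set_Pi_pmf finite_set_pmf_of_lessThan n_pos) auto
  have P_fin: "finite (set_pmf P)"
    unfolding P_def by (intro finite_set_Pi_pmf Y_fin) auto
  have minibatch:
    "measure_pmf.expectation Y (\<lambda>y. norm (estimate (w(k := y)) k - G (iterate (w(k := y)) k)))
       \<le> L * (real m * \<gamma> * D) / sqrt (real b)" for w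
  proof -
    have "iterate (w(k := y)) k = iterate w k" "snapshot (w(k := y)) k = snapshot w k" for y
      by (intro iterate_cong snapshot_cong; simp)+
    then have "estimate (w(k := y)) k - G (iterate (w(k := y)) k)
                 = (1 / real b) *\<^sub>R (\<Sum>j<b. gf (y j) (iterate w k) - gf (y j) (snapshot w k))
                   + G (snapshot w k) - G (iterate w k)" for y
      by (simp add: estimate_def)
    moreover have "norm (gf i (iterate w k) - gf i (snapshot w k)) \<le> L * (real m * \<gamma> * D)" if "i < n" for i
      using smooth[OF that iterate_in iterate_in, of w k w "k - k mod m"] snapshot_dist[of w k] L_nonneg
      by (simp add: snapshot_def order_trans mult_left_mono)
    ultimately show ?thesis
      unfolding Y_def by (simp add: expectation_minibatch_error[OF n_pos b_pos])
  qed
  have sample_eq: "sample_pmf T b n = Pi_pmf (insert k ({..<T} - {k})) (\<lambda>_. 0) (\<lambda>_. Y)"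
    using assms by (simp add: sample_pmf_def Y_def insert_absorb)
  have "measure_pmf.expectation (sample_pmf T b n) (\<lambda>w. norm (estimate w k - G (iterate w k)))
          = measure_pmf.expectation P
              (\<lambda>w. measure_pmf.expectation Y
                     (\<lambda>y. norm (estimate (w(k := y)) k - G (iterate (w(k := y)) k))))"
    unfolding sample_eq P_def by (rule expectation_Pi_pmf_insert) (auto simp: Y_fin)
  also have "\<dots> \<le> measure_pmf.expectation P (\<lambda>_. L * (real m * \<gamma> * D) / sqrt (real b))"
    by (intro integral_mono integrable_measure_pmf_finite P_fin minibatch)
  finally show ?thesis
    by simp
qed

lemma expectation_svfw_output:
  fixes h :: "'a \<Rightarrow> real"
  assumes "S \<ge> 1"
  shows "measure_pmf.expectation (svfw_output n gf lmo m S \<gamma> b x0) h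
           = measure_pmf.expectation (sample_pmf (S * m) b n)
               (\<lambda>w. (\<Sum>k<S * m. h (iterate w k)) / real (S * m))"
proof -
  have "{..<S * m} \<noteq> {}"
    using assms m_pos by (simp add: lessThan_empty_iff)
  moreover have "svfw_output n gf lmo m S \<gamma> b x0
                   = sample_pmf (S * m) b n
                       \<bind> (\<lambda>w. pmf_of_set {..<S * m} \<bind> (\<lambda>k. return_pmf (iterate w k)))"
    by (simp add: svfw_output_def iterate_def)
  ultimately show ?thesis
    using finite_set_sample_pmf[OF n_pos]
    by (simp add: expectation_bind_pmf_finite integral_pmf_of_set sum_divide_distrib)
qed

lemma expected_gap_bound:
  assumes "S \<ge> 1" and min: "\<And>x. x \<in> \<Omega> \<Longrightarrow> F xstar \<le> F x"
  shows "\<gamma> * real (S * m) * measure_pmf.expectation (svfw_output n gf lmo m S \<gamma> b x0) (fw_gap \<Omega> G)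
           \<le> F x0 - F xstar
              + real (S * m) * (L / 2 * \<gamma>^2 * D^2 + \<gamma> * D * (L * (real m * \<gamma> * D) / sqrt (real b)))"
proof -
  define T where "T = S * m"
  define W where "W = sample_pmf T b n"
  define err where "err w k = norm (estimate w k - G (iterate w k))" for w k
  have int: "integrable W h" for h :: "(nat \<Rightarrow> nat \<Rightarrow> nat) \<Rightarrow> real"
    unfolding W_def by (intro integrable_measure_pmf_finite finite_set_sample_pmf n_pos)
  have "T \<noteq> 0"
    using assms m_pos by (simp add: T_def)
  then have "\<gamma> * real T * measure_pmf.expectation (svfw_output n gf lmo m S \<gamma> b x0) (fw_gap \<Omega> G)
               = measure_pmf.expectation W (\<lambda>w. \<gamma> * (\<Sum>k<T. fw_gap \<Omega> G (iterate w k)))"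
    using assms by (simp add: expectation_svfw_output T_def W_def)
  also have "\<dots> \<le> measure_pmf.expectation W
                     (\<lambda>w. F x0 - F xstar + real T * (L / 2 * \<gamma>^2 * D^2) + \<gamma> * D * (\<Sum>k<T. err w k))"
    using gap_sum_bound min[OF iterate_in] unfolding err_def
    by (intro integral_mono int) (smt (verit))
  also have "\<dots> = F x0 - F xstar + real T * (L / 2 * \<gamma>^2 * D^2)
                   + \<gamma> * D * (\<Sum>k<T. measure_pmf.expectation W (\<lambda>w. err w k))"
    by (simp add: int Bochner_Integration.integral_add Bochner_Integration.integral_sum)
  also have "\<dots> \<le> F x0 - F xstar + real T * (L / 2 * \<gamma>^2 * D^2)
                   + \<gamma> * D * (\<Sum>k<T. L * (real m * \<gamma> * D) / sqrt (real b))"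
    unfolding W_def err_def using step_nonneg diam[OF x0_in x0_in]
    by (intro add_left_mono mult_left_mono sum_mono expected_estimate_error) auto
  finally show ?thesis
    by (simp add: T_def algebra_simps)
qed

lemma expected_gap_stationary:
  assumes "S \<ge> 1" and "\<gamma> = 0" and "\<And>x. x \<in> \<Omega> \<Longrightarrow> F x0 \<le> F x"
  shows "measure_pmf.expectation (svfw_output n gf lmo m S \<gamma> b x0) (fw_gap \<Omega> G) \<le> 0"
proof -
  have "iterate w k = x0" for w k
  proof (induction k)
    case (Suc k)
    then show ?case
      using iterate_Suc[of w k] \<open>\<gamma> = 0\<close> by simp
  qed simp
  moreover have "fw_gap \<Omega> G x0 \<le> 0"
    by (rule fw_gap_nonpos_at_minimizer[where F = F and G = G,
          OF nonempty convex x0_in assms(3) diam L_nonneg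
          F_quadratic_bound[OF x0_in]])
  ultimately show ?thesis
    using assms(1) m_pos by (simp add: expectation_svfw_output divide_nonpos_pos)
qed

theorem expected_gap_rate:
  assumes "S \<ge> 1" and "b = m^2" and "L > 0" and "\<beta> > 0"
    and xstar: "xstar \<in> \<Omega>" and min: "\<And>x. x \<in> \<Omega> \<Longrightarrow> F xstar \<le> F x"
    and \<gamma>: "\<gamma> = sqrt ((F x0 - F xstar) / (real (S * m) * L * D^2 * \<beta>))"
  shows "measure_pmf.expectation (svfw_output n gf lmo m S \<gamma> b x0) (fw_gap \<Omega> G)
           \<le> 2 * D / sqrt (real (S * m) * \<beta>) * sqrt (L * (F x0 - F xstar)) * (1 + \<beta>)"
proof (cases "F x0 = F xstar")
  case True
  then show ?thesis
    using expected_gap_stationary[OF \<open>S \<ge> 1\<close>] min \<gamma> by simp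
next
  case False
  have "D > 0"
  proof (rule ccontr)
    assume "\<not> D > 0"
    then have "norm (xstar - x0) \<le> 0"
      using diam[OF xstar x0_in] by linarith
    then show False
      using False by simp
  qed
  have "\<gamma> * real (S * m) * measure_pmf.expectation (svfw_output n gf lmo m S \<gamma> b x0) (fw_gap \<Omega> G)
          \<le> F x0 - F xstar + real (S * m) * (L / 2 * \<gamma>^2 * D^2 + \<gamma> * D * (L * \<gamma> * D))"
    using expected_gap_bound[OF \<open>S \<ge> 1\<close> min] \<open>b = m^2\<close> m_pos by (simp add: mult.assoc)
  moreover have "1 \<le> S * m"
    using \<open>S \<ge> 1\<close> m_pos by simp
  then have "1 \<le> real (S * m)"
    by (metis of_nat_1 of_nat_le_iff)
  ultimately show ?thesis
    using False min[OF x0_in] by (intro svfw_rate[OF _ \<open>D > 0\<close> \<open>L > 0\<close> \<open>\<beta> > 0\<close> _ \<gamma>]) auto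
qed

end

theorem theorem3:
  fixes \<Omega> :: "'a::euclidean_space set"
    and f :: "nat \<Rightarrow> 'a \<Rightarrow> real" and gf :: "nat \<Rightarrow> 'a \<Rightarrow> 'a"
    and n m S :: nat and L D \<beta> :: real and x0 xstar :: 'a
    and lmo :: "'a \<Rightarrow> 'a"
  assumes "\<Omega> \<noteq> {}" and "convex \<Omega>" and "compact \<Omega>"
    and "n \<ge> 1"
    and "L > 0"
    and diam: "\<And>x y. x \<in> \<Omega> \<Longrightarrow> y \<in> \<Omega> \<Longrightarrow> norm (x - y) \<le> D"
    and deriv: "\<And>i x. i < n \<Longrightarrow> x \<in> \<Omega> \<Longrightarrow> (f i has_derivative (\<lambda>h. gf i x \<bullet> h)) (at x)"
    and smooth: "\<And>i x y. i < n \<Longrightarrow> x \<in> \<Omega> \<Longrightarrow> y \<in> \<Omega> \<Longrightarrow> norm (gf i x - gf i y) \<le> L * norm (x - y)"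
    and "xstar \<in> \<Omega>" and "\<And>x. x \<in> \<Omega> \<Longrightarrow> avgF n f xstar \<le> avgF n f x"
    and "x0 \<in> \<Omega>"
    and "\<beta> > 0"
    and "\<beta> \<ge> 2 * (avgF n f x0 - avgF n f xstar) / (L * D^2)"
    and "m \<ge> 1" and "S \<ge> 1"
    and "is_lmo \<Omega> lmo"
  shows "measure_pmf.expectation
           (svfw_output n gf lmo m S
              (sqrt ((avgF n f x0 - avgF n f xstar) / (real (S * m) * L * D^2 * \<beta>)))
              (m^2) x0)
           (fw_gap \<Omega> (avgGrad n gf))
         \<le> 2 * D / sqrt (real (S * m) * \<beta>)
             * sqrt (L * (avgF n f x0 - avgF n f xstar)) * (1 + \<beta>)"
proof -
  define \<gamma> where "\<gamma> = sqrt ((avgF n f x0 - avgF n f xstar) / (real (S * m) * L * D^2 * \<beta>))"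
  have "1 \<le> S * m"
    using assms(14,15) by simp
  then have "1 \<le> real (S * m)"
    by (metis of_nat_1 of_nat_le_iff)
  moreover have "0 \<le> avgF n f x0 - avgF n f xstar"
    using assms(10,11) by simp
  ultimately have "\<gamma> \<le> 1" and "0 \<le> \<gamma>"
    using svfw_step_size_le_one[OF _ assms(5,12) _ assms(13)] assms(5,12) by (simp_all add: \<gamma>_def)
  interpret svfw_run \<Omega> f gf n L D lmo m "m^2" \<gamma> x0
    using assms \<open>0 \<le> \<gamma>\<close> \<open>\<gamma> \<le> 1\<close> by unfold_locales auto
  from expected_gap_rate[OF assms(15) refl assms(5,12,9,10) \<gamma>_def]
  show ?thesis
    unfolding \<gamma>_def .
qed

end
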